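(* For a mixed graph $M_G$ the following are equivalent: (a) $\rho(M_G)<\sqrt2$; (b) $\rho(M_G)\le 1$; (c) every connected component of $M_G$ is an undirected edge, an arc, or an isolated vertex.
   Context: A mixed graph $M_G$ is obtained from a finite simple graph $G$ by orienting the edges of some subset of $E(G)$; its components are those of $G$ with the inherited orientations. With $\omega=\frac{1+\mathbf{i}\sqrt3}{2}$, $N(M_G)$ has $(u,v)$-entry $\omega$ if $\overrightarrow{uv}$ is an arc, $\bar\omega$ if $\overrightarrow{vu}$ is an arc, $1$ for an undirected edge, $0$ otherwise. The spectral radius $\rho(M_G)$ is the maximum absolute value of an eigenvalue of $N(M_G)$. *)

theory Defs
  imports "Jordan_Normal_Form.Spectral_Radius"
begin

text \<open>A mixed graph on vertex set {0..<n}: E is the (symmetric, irreflexive) edge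
relation of the underlying simple graph G; D u v means that the edge uv is oriented
as the arc from u to v.\<close>

definition mixed_graph :: "nat \<Rightarrow> (nat \<Rightarrow> nat \<Rightarrow> bool) \<Rightarrow> (nat \<Rightarrow> nat \<Rightarrow> bool) \<Rightarrow> bool" where
  "mixed_graph n E D \<longleftrightarrow>
     (\<forall>u v. E u v \<longrightarrow> u < n \<and> v < n) \<and>
     (\<forall>u v. E u v \<longrightarrow> E v u) \<and>
     (\<forall>u. \<not> E u u) \<and>
     (\<forall>u v. D u v \<longrightarrow> E u v) \<and>
     (\<forall>u v. \<not> (D u v \<and> D v u))"

definition omega :: complex where
  "omega = Complex (1/2) (sqrt 3 / 2)"

definition mixed_matrix :: "nat \<Rightarrow> (nat \<Rightarrow> nat \<Rightarrow> bool) \<Rightarrow> (nat \<Rightarrow> nat \<Rightarrow> bool) \<Rightarrow> complex mat" where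
  "mixed_matrix n E D = mat n n (\<lambda>(u, v).
     if D u v then omega
     else if D v u then cnj omega
     else if E u v then 1 else 0)"

definition undirected_edge :: "(nat \<Rightarrow> nat \<Rightarrow> bool) \<Rightarrow> (nat \<Rightarrow> nat \<Rightarrow> bool) \<Rightarrow> nat \<Rightarrow> nat \<Rightarrow> bool" where
  "undirected_edge E D u v \<longleftrightarrow> E u v \<and> \<not> D u v \<and> \<not> D v u"

definition component :: "nat \<Rightarrow> (nat \<Rightarrow> nat \<Rightarrow> bool) \<Rightarrow> nat \<Rightarrow> nat set" where
  "component n E v = {u. u < n \<and> E\<^sup>*\<^sup>* v u}"

definition components :: "nat \<Rightarrow> (nat \<Rightarrow> nat \<Rightarrow> bool) \<Rightarrow> nat set set" where
  "components n E = component n E ` {0..<n}"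

end

theory Submission
  imports Defs "HOL-Analysis.L2_Norm"
begin

text \<open>The matrix N of a mixed graph is Hermitian and its entries have modulus 1 exactly on
the edges, so the u-th row of N has absolute row sum and squared length both equal to deg u.
Bounding an eigenvector at a coordinate of maximal modulus gives rho(N) <= max deg.
Conversely, for Hermitian N the squared lengths f(k) of the u-th rows of N^k satisfy
f(k+1)^2 <= f(k) f(k+2) by Cauchy-Schwarz, so they grow at least like (deg u)^k, whereas
rho(N) < c bounds the entries of N^k by O(c^k) (Jordan normal form); hence deg u <= rho(N)^2.
Thus rho < sqrt 2 forces maximum degree at most 1, which forces rho <= 1, and maximum degree at
most 1 says exactly that every component is an isolated vertex, an undirected edge or an arc.\<close>

lemma index_pow_mat_Suc:
  assumes "A \<in> carrier_mat n n" "i < n" "j < n"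
  shows "(A ^\<^sub>m Suc k) $$ (i,j) = (\<Sum>l<n. (A ^\<^sub>m k) $$ (i,l) * A $$ (l,j))"
  using assms by (auto simp: scalar_prod_def lessThan_atLeast0 intro!: sum.cong)

lemma index_mult_mat_vec_sum:
  assumes "A \<in> carrier_mat n n" "x \<in> carrier_vec n" "i < n"
  shows "(A *\<^sub>v x) $ i = (\<Sum>j<n. A $$ (i,j) * x $ j)"
  using assms by (auto simp: scalar_prod_def lessThan_atLeast0 intro!: sum.cong)

lemma pow_mat_smult:
  fixes A :: "'a :: comm_ring_1 mat"
  assumes "A \<in> carrier_mat n n"
  shows "(a \<cdot>\<^sub>m A) ^\<^sub>m k = a ^ k \<cdot>\<^sub>m (A ^\<^sub>m k)"
  by (induction k) (use assms in \<open>auto simp: mult_smult_distrib mult_smult_assoc_mat intro!: eq_matI\<close>)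

lemma eigenvector_smult:
  fixes A :: "'a :: comm_ring_1 mat"
  assumes "A \<in> carrier_mat n n" "eigenvector A v \<mu>"
  shows "eigenvector (a \<cdot>\<^sub>m A) v (a * \<mu>)"
proof -
  have "v \<in> carrier_vec n" using assms unfolding eigenvector_def by auto
  hence "(a \<cdot>\<^sub>m A) *\<^sub>v v = a \<cdot>\<^sub>v (A *\<^sub>v v)"
    using assms(1) by (intro eq_vecI) auto
  with assms(2) show ?thesis
    unfolding eigenvector_def by (auto simp: smult_smult_assoc)
qed

lemma spectral_radius_nonneg:
  assumes "A \<in> carrier_mat n n" "n > 0"
  shows "spectral_radius A \<ge> 0"
  using spectral_radius_mem_max(1)[OF assms] by auto

lemma spectral_radius_eigenvector:
  assumes "A \<in> carrier_mat n n" "n > 0"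
  obtains \<mu> v where "eigenvector A v \<mu>" "spectral_radius A = norm \<mu>"
  using spectral_radius_mem_max(1)[OF assms] unfolding spectrum_def eigenvalue_def by auto

lemma spectral_radius_smult_le:
  assumes A: "A \<in> carrier_mat n n" and n: "n > 0" and a: "a \<noteq> 0"
  shows "spectral_radius (a \<cdot>\<^sub>m A) \<le> norm a * spectral_radius A"
proof -
  have aA: "a \<cdot>\<^sub>m A \<in> carrier_mat n n" using A by simp
  obtain \<mu> v where ev: "eigenvector (a \<cdot>\<^sub>m A) v \<mu>" and \<mu>: "spectral_radius (a \<cdot>\<^sub>m A) = norm \<mu>"
    using spectral_radius_eigenvector[OF aA n] .
  have "inverse a \<cdot>\<^sub>m (a \<cdot>\<^sub>m A) = A"
    using a by (intro eq_matI) auto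
  with eigenvector_smult[OF aA ev, of "inverse a"]
  have "eigenvalue A (inverse a * \<mu>)" unfolding eigenvalue_def by auto
  hence "norm (inverse a * \<mu>) \<le> spectral_radius A"
    by (intro spectral_radius_mem_max(2)[OF A n]) (auto simp: spectrum_def)
  moreover have "norm a > 0" using a by simp
  ultimately show ?thesis by (simp add: \<mu> norm_mult norm_inverse norm_divide field_simps)
qed

lemma power_entries_bound_of_spectral_radius_less:
  assumes A: "A \<in> carrier_mat n n" and n: "n > 0" and less: "spectral_radius A < c"
  obtains C where "\<And>k i j. i < n \<Longrightarrow> j < n \<Longrightarrow> norm ((A ^\<^sub>m k) $$ (i,j)) \<le> C * c ^ k"
proof -
  have c: "c > 0" using spectral_radius_nonneg[OF A n] less by linarith
  let ?B = "complex_of_real (1 / c) \<cdot>\<^sub>m A"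
  have "spectral_radius ?B \<le> spectral_radius A / c"
    using spectral_radius_smult_le[OF A n, of "complex_of_real (1 / c)"] c by (simp add: norm_divide)
  also have "\<dots> < 1" using less c by simp
  finally obtain C where C: "\<And>k. norm_bound (?B ^\<^sub>m k) C"
    using spectral_radius_jnf_norm_bound_less_1_upper_triangular[of ?B n] A by auto
  have "norm ((A ^\<^sub>m k) $$ (i,j)) \<le> C * c ^ k" if ij: "i < n" "j < n" for k i j
  proof -
    have "norm ((A ^\<^sub>m k) $$ (i,j)) / c ^ k = norm ((?B ^\<^sub>m k) $$ (i,j))"
      using A ij c by (simp add: pow_mat_smult norm_divide norm_power power_one_over)
    also have "\<dots> \<le> C"
      using C[of k] A ij unfolding norm_bound_def by (simp add: pow_mat_dim_square[of _ n])
    finally show ?thesis using c by (simp add: divide_le_eq)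
  qed
  with that show thesis .
qed

lemma spectral_radius_le_row_norm_sum:
  fixes A :: "complex mat"
  assumes A: "A \<in> carrier_mat n n" and n: "n > 0"
    and rows: "\<And>i. i < n \<Longrightarrow> (\<Sum>j<n. norm (A $$ (i,j))) \<le> b"
  shows "spectral_radius A \<le> b"
proof -
  obtain \<mu> x where ev: "eigenvector A x \<mu>" and \<mu>: "spectral_radius A = norm \<mu>"
    using spectral_radius_eigenvector[OF A n] .
  hence x: "x \<in> carrier_vec n" "x \<noteq> 0\<^sub>v n" "A *\<^sub>v x = \<mu> \<cdot>\<^sub>v x"
    using A unfolding eigenvector_def by auto
  define m where "m = Max ((\<lambda>j. norm (x $ j)) ` {..<n})"
  have "m \<in> (\<lambda>j. norm (x $ j)) ` {..<n}"
    unfolding m_def using n by (intro Max_in) auto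
  then obtain i where i: "i < n" "norm (x $ i) = m" by auto
  have le_m: "norm (x $ j) \<le> m" if "j < n" for j
    unfolding m_def using that by (intro Max_ge) auto
  have "m > 0"
  proof (rule ccontr)
    assume "\<not> m > 0"
    hence "x $ j = 0" if "j < n" for j
      using le_m[OF that] by (meson norm_le_zero_iff not_less order.trans)
    hence "x = 0\<^sub>v n" using x(1) by (intro eq_vecI) auto
    with x(2) show False ..
  qed
  have "\<mu> * x $ i = (\<Sum>j<n. A $$ (i,j) * x $ j)"
    using index_mult_mat_vec_sum[OF A x(1) i(1)] x(1,3) i(1) by simp
  hence "norm \<mu> * m = norm (\<Sum>j<n. A $$ (i,j) * x $ j)"
    by (metis i(2) norm_mult)
  also have "\<dots> \<le> (\<Sum>j<n. norm (A $$ (i,j)) * m)"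
    by (rule order.trans[OF norm_sum], rule sum_mono) (simp add: norm_mult le_m mult_left_mono)
  also have "\<dots> \<le> b * m"
    using rows[OF i(1)] \<open>m > 0\<close> by (simp add: sum_distrib_right[symmetric])
  finally show ?thesis using \<open>m > 0\<close> \<mu> by simp
qed

lemma log_convex_ge_geometric:
  fixes f :: "nat \<Rightarrow> real"
  assumes log_convex: "\<And>k. (f (Suc k))\<^sup>2 \<le> f k * f (Suc (Suc k))"
    and pos: "f 0 > 0" and q: "q > 0" and first: "q * f 0 \<le> f 1"
  shows "q ^ k * f 0 \<le> f k"
proof -
  have step: "f k > 0 \<and> q * f k \<le> f (Suc k)" for k
  proof (induction k)
    case 0 with pos first show ?case by simp
  next
    case (Suc k)
    hence fk: "f k > 0" and fSk: "f (Suc k) > 0"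
      using q by (auto intro: less_le_trans[OF mult_pos_pos])
    have "f k * (q * f (Suc k)) = f (Suc k) * (q * f k)" by simp
    also have "\<dots> \<le> f (Suc k) * f (Suc k)" using Suc fSk by simp
    also have "\<dots> \<le> f k * f (Suc (Suc k))" using log_convex[of k] by (simp add: power2_eq_square)
    finally show ?case using fk fSk by (simp add: mult_le_cancel_left_pos)
  qed
  show ?thesis
  proof (induction k)
    case (Suc k)
    have "q ^ Suc k * f 0 = q * (q ^ k * f 0)" by simp
    also have "\<dots> \<le> q * f k" using Suc q by simp
    also have "\<dots> \<le> f (Suc k)" using step by blast
    finally show ?case .
  qed simp
qed

lemma hermitian_power_row_inner:
  fixes A :: "complex mat"
  assumes A: "A \<in> carrier_mat n n" and i: "i < n"
    and hermitian: "\<And>i j. i < n \<Longrightarrow> j < n \<Longrightarrow> cnj (A $$ (j,i)) = A $$ (i,j)"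
  shows "(\<Sum>j<n. (A ^\<^sub>m Suc k) $$ (i,j) * cnj ((A ^\<^sub>m Suc k) $$ (i,j)))
       = (\<Sum>l<n. (A ^\<^sub>m k) $$ (i,l) * cnj ((A ^\<^sub>m Suc (Suc k)) $$ (i,l)))"
proof -
  define r where "r k j = (A ^\<^sub>m k) $$ (i,j)" for k j
  have r_Suc: "r (Suc k) j = (\<Sum>l<n. r k l * A $$ (l,j))" if "j < n" for k j
    unfolding r_def by (rule index_pow_mat_Suc[OF A i that])
  have "(\<Sum>j<n. r (Suc k) j * cnj (r (Suc k) j))
      = (\<Sum>j<n. \<Sum>l<n. r k l * (A $$ (l,j) * cnj (r (Suc k) j)))"
    by (intro sum.cong) (auto simp: r_Suc sum_distrib_right mult.assoc)
  also have "\<dots> = (\<Sum>l<n. r k l * cnj (\<Sum>j<n. r (Suc k) j * A $$ (j,l)))"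
    by (subst sum.swap) (auto simp: sum_distrib_left hermitian mult.commute intro!: sum.cong)
  also have "\<dots> = (\<Sum>l<n. r k l * cnj (r (Suc (Suc k)) l))"
    by (intro sum.cong) (auto simp: r_Suc)
  finally show ?thesis unfolding r_def .
qed

lemma hermitian_power_row_log_convex:
  fixes A :: "complex mat"
  assumes A: "A \<in> carrier_mat n n" and i: "i < n"
    and hermitian: "\<And>i j. i < n \<Longrightarrow> j < n \<Longrightarrow> cnj (A $$ (j,i)) = A $$ (i,j)"
  defines "f \<equiv> \<lambda>k. \<Sum>j<n. (norm ((A ^\<^sub>m k) $$ (i,j)))\<^sup>2"
  shows "(f (Suc k))\<^sup>2 \<le> f k * f (Suc (Suc k))"
proof -
  let ?r = "\<lambda>k j. (A ^\<^sub>m k) $$ (i,j)"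
  have f_nonneg: "f k \<ge> 0" for k unfolding f_def by (intro sum_nonneg) auto
  have "complex_of_real (f (Suc k)) = (\<Sum>j<n. ?r (Suc k) j * cnj (?r (Suc k) j))"
    unfolding f_def of_real_sum by (intro sum.cong refl) (simp only: complex_norm_square)
  also have "\<dots> = (\<Sum>l<n. ?r k l * cnj (?r (Suc (Suc k)) l))"
    by (rule hermitian_power_row_inner[OF A i hermitian])
  finally have "f (Suc k) \<le> (\<Sum>l<n. norm (?r k l) * norm (?r (Suc (Suc k)) l))"
    by (metis (no_types, lifting) f_nonneg abs_of_nonneg complex_mod_cnj norm_mult norm_of_real
        norm_sum sum.cong)
  also have "\<dots> \<le> L2_set (\<lambda>l. norm (?r k l)) {..<n} * L2_set (\<lambda>l. norm (?r (Suc (Suc k)) l)) {..<n}"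
    using L2_set_mult_ineq[of "\<lambda>l. norm (?r k l)" "\<lambda>l. norm (?r (Suc (Suc k)) l)"] by simp
  also have "\<dots> = sqrt (f k * f (Suc (Suc k)))"
    unfolding L2_set_def f_def by (simp add: real_sqrt_mult)
  finally show ?thesis
    using f_nonneg by (metis mult_nonneg_nonneg power_mono real_sqrt_pow2)
qed

lemma le_of_power_le_const_mult_power:
  fixes q b M :: real
  assumes le: "\<And>k. q ^ k \<le> M * b ^ k" and b: "b > 0"
  shows "q \<le> b"
proof (rule ccontr)
  assume "\<not> q \<le> b"
  with b obtain k where "M < (q / b) ^ k"
    using real_arch_pow[of "q / b"] by auto
  moreover have "(q / b) ^ k \<le> M"
    using le[of k] b by (simp add: power_divide pos_divide_le_eq)
  ultimately show False by simp
qed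

lemma hermitian_row_norm_le_spectral_radius:
  fixes A :: "complex mat"
  assumes A: "A \<in> carrier_mat n n" and i: "i < n"
    and hermitian: "\<And>i j. i < n \<Longrightarrow> j < n \<Longrightarrow> cnj (A $$ (j,i)) = A $$ (i,j)"
  shows "(\<Sum>j<n. (norm (A $$ (i,j)))\<^sup>2) \<le> (spectral_radius A)\<^sup>2"
proof -
  define f where "f k = (\<Sum>j<n. (norm ((A ^\<^sub>m k) $$ (i,j)))\<^sup>2)" for k
  have n: "n > 0" using i by simp
  have "f 0 = (\<Sum>j<n. if j = i then 1 else 0)"
    using A i unfolding f_def by (intro sum.cong) auto
  hence f0: "f 0 = 1" using i by simp
  have f1: "f 1 = (\<Sum>j<n. (norm (A $$ (i,j)))\<^sup>2)"
    using A unfolding f_def by (intro sum.cong) auto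
  have f1_nonneg: "f 1 \<ge> 0" unfolding f_def by (intro sum_nonneg) auto
  have log_convex: "(f (Suc k))\<^sup>2 \<le> f k * f (Suc (Suc k))" for k
    unfolding f_def by (rule hermitian_power_row_log_convex[OF A i hermitian])
  have "sqrt (f 1) \<le> c" if less: "spectral_radius A < c" for c
  proof -
    have "c > 0" using spectral_radius_nonneg[OF A n] less by linarith
    obtain C where C: "\<And>k j. j < n \<Longrightarrow> norm ((A ^\<^sub>m k) $$ (i,j)) \<le> C * c ^ k"
      using power_entries_bound_of_spectral_radius_less[OF A n less] i by metis
    have "f 1 \<le> c\<^sup>2"
    proof (cases "f 1 = 0")
      case False
      have "f 1 ^ k \<le> (real n * C\<^sup>2) * (c\<^sup>2) ^ k" for k
      proof -
        have "f 1 ^ k \<le> f k"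
          using log_convex_ge_geometric[of f "f 1" k, OF log_convex] f0 f1_nonneg False by simp
        also have "\<dots> \<le> (\<Sum>j<n. (C * c ^ k)\<^sup>2)"
          unfolding f_def using C by (intro sum_mono power_mono) auto
        also have "\<dots> = (real n * C\<^sup>2) * (c\<^sup>2) ^ k"
          by (simp add: power_mult_distrib power_mult[symmetric] mult.commute)
        finally show ?thesis .
      qed
      then show ?thesis by (rule le_of_power_le_const_mult_power) (use \<open>c > 0\<close> in simp)
    qed simp
    thus ?thesis using real_sqrt_le_mono[of "f 1" "c\<^sup>2"] \<open>c > 0\<close> by simp
  qed
  hence "sqrt (f 1) \<le> spectral_radius A" by (rule dense_ge)
  thus ?thesis using f1 f1_nonneg by (metis power_mono real_sqrt_ge_zero real_sqrt_pow2)
qed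

definition vertex_degree :: "nat \<Rightarrow> (nat \<Rightarrow> nat \<Rightarrow> bool) \<Rightarrow> nat \<Rightarrow> nat" where
  "vertex_degree n E u = card {v \<in> {..<n}. E u v}"

lemma norm_omega: "norm omega = 1"
  by (simp add: omega_def complex_norm power_divide)

lemma mixed_matrix_carrier: "mixed_matrix n E D \<in> carrier_mat n n"
  by (simp add: mixed_matrix_def)

lemma index_mixed_matrix:
  "u < n \<Longrightarrow> v < n \<Longrightarrow> mixed_matrix n E D $$ (u,v) =
     (if D u v then omega else if D v u then cnj omega else if E u v then 1 else 0)"
  by (simp add: mixed_matrix_def)

lemma norm_index_mixed_matrix:
  assumes "mixed_graph n E D" "u < n" "v < n"
  shows "norm (mixed_matrix n E D $$ (u,v)) = of_bool (E u v)"
  using assms unfolding mixed_graph_def by (auto simp: index_mixed_matrix norm_omega)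

lemma cnj_index_mixed_matrix:
  assumes "mixed_graph n E D" "u < n" "v < n"
  shows "cnj (mixed_matrix n E D $$ (v,u)) = mixed_matrix n E D $$ (u,v)"
  using assms unfolding mixed_graph_def by (auto simp: index_mixed_matrix)

lemma sum_norm_mixed_matrix_row:
  assumes "mixed_graph n E D" "u < n" "k > 0"
  shows "(\<Sum>v<n. norm (mixed_matrix n E D $$ (u,v)) ^ k) = real (vertex_degree n E u)"
proof -
  have "(\<Sum>v<n. norm (mixed_matrix n E D $$ (u,v)) ^ k) = (\<Sum>v<n. of_bool (E u v))"
    using assms by (intro sum.cong) (auto simp: norm_index_mixed_matrix of_bool_def)
  then show ?thesis by (simp add: vertex_degree_def Int_def)
qed

lemma spectral_radius_mixed_matrix_le_1:
  assumes "mixed_graph n E D" "n > 0" "\<And>u. u < n \<Longrightarrow> vertex_degree n E u \<le> 1"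
  shows "spectral_radius (mixed_matrix n E D) \<le> 1"
  using assms sum_norm_mixed_matrix_row[OF assms(1), of _ 1]
  by (intro spectral_radius_le_row_norm_sum[OF mixed_matrix_carrier]) auto

lemma degree_le_spectral_radius_mixed_matrix:
  assumes "mixed_graph n E D" "u < n"
  shows "real (vertex_degree n E u) \<le> (spectral_radius (mixed_matrix n E D))\<^sup>2"
proof -
  have "(\<Sum>v<n. (norm (mixed_matrix n E D $$ (u,v)))\<^sup>2) \<le> (spectral_radius (mixed_matrix n E D))\<^sup>2"
    by (rule hermitian_row_norm_le_spectral_radius[OF mixed_matrix_carrier assms(2)])
      (rule cnj_index_mixed_matrix[OF assms(1)])
  then show ?thesis by (simp add: sum_norm_mixed_matrix_row[OF assms])
qed

lemma vertex_degree_le_1_iff: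
  assumes "mixed_graph n E D"
  shows "(\<forall>u<n. vertex_degree n E u \<le> 1) \<longleftrightarrow> (\<forall>u v w. E u v \<longrightarrow> E u w \<longrightarrow> v = w)"
proof -
  have edges: "E u v \<Longrightarrow> u < n \<and> v < n" for u v
    using assms unfolding mixed_graph_def by blast
  have "vertex_degree n E u \<le> 1 \<longleftrightarrow> (\<forall>v w. E u v \<longrightarrow> E u w \<longrightarrow> v = w)" for u
    unfolding vertex_degree_def One_nat_def using edges by (subst card_le_Suc0_iff_eq) auto
  with edges show ?thesis by blast
qed

lemma component_of_unique_neighbours:
  assumes G: "mixed_graph n E D" and unique: "\<And>u v w. E u v \<Longrightarrow> E u w \<Longrightarrow> v = w"
    and v: "v < n"
  shows "component n E v = {v} \<or> (\<exists>w. E v w \<and> component n E v = {v, w})"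
proof (cases "\<exists>w. E v w")
  case False
  have "E\<^sup>*\<^sup>* v u \<Longrightarrow> u = v" for u
    by (induction rule: rtranclp_induct) (use False in auto)
  then show ?thesis unfolding component_def using v by auto
next
  case True
  then obtain w where w: "E v w" ..
  have "w < n" "E w v" using G w unfolding mixed_graph_def by auto
  have "E\<^sup>*\<^sup>* v u \<Longrightarrow> u = v \<or> u = w" for u
    by (induction rule: rtranclp_induct) (use w \<open>E w v\<close> unique in blast)+
  moreover have "E\<^sup>*\<^sup>* v w" using w by auto
  ultimately have "component n E v = {v, w}" unfolding component_def using v \<open>w < n\<close> by auto
  with w show ?thesis by blast
qed

lemma components_classification_iff_unique_neighbours:
  assumes G: "mixed_graph n E D"
  shows "(\<forall>C \<in> components n E.
            (\<exists>u v. C = {u, v} \<and> undirected_edge E D u v)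
          \<or> (\<exists>u v. C = {u, v} \<and> D u v)
          \<or> (\<exists>u. C = {u}))
     \<longleftrightarrow> (\<forall>u v w. E u v \<longrightarrow> E u w \<longrightarrow> v = w)"
  (is "(\<forall>C \<in> components n E. ?small C) \<longleftrightarrow> _")
proof
  assume small: "\<forall>C \<in> components n E. ?small C"
  show "\<forall>u v w. E u v \<longrightarrow> E u w \<longrightarrow> v = w"
  proof (intro allI impI)
    fix u v w assume uv: "E u v" and uw: "E u w"
    have "u < n" "v < n" "w < n" "u \<noteq> v" "u \<noteq> w"
      using G uv uw unfolding mixed_graph_def by metis+
    hence "component n E u \<in> components n E" and "{u, v, w} \<subseteq> component n E u"
      using uv uw unfolding components_def component_def by auto
    with small have "?small (component n E u)" by blast
    hence "\<exists>a b. component n E u \<subseteq> {a, b}" by blast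
    with \<open>{u, v, w} \<subseteq> component n E u\<close> obtain a b where "{u, v, w} \<subseteq> {a, b}" by blast
    with \<open>u \<noteq> v\<close> \<open>u \<noteq> w\<close> show "v = w" by blast
  qed
next
  assume unique: "\<forall>u v w. E u v \<longrightarrow> E u w \<longrightarrow> v = w"
  show "\<forall>C \<in> components n E. ?small C"
  proof
    fix C assume "C \<in> components n E"
    then obtain v where v: "v < n" and C: "C = component n E v"
      unfolding components_def by auto
    from component_of_unique_neighbours[OF G _ v] unique
    consider "C = {v}" | w where "E v w" "C = {v, w}" unfolding C by blast
    then show "?small C"
    proof cases
      case 1
      then show ?thesis by blast
    next
      case (2 w)
      then consider "D v w" | "D w v" | "undirected_edge E D v w"
        unfolding undirected_edge_def by blast
      then show ?thesis using 2(2) by cases (blast, metis insert_commute, blast)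
    qed
  qed
qed

theorem theorem6p4:
  fixes n :: nat and E D :: "nat \<Rightarrow> nat \<Rightarrow> bool"
  assumes "mixed_graph n E D" and "n > 0"
  shows "(spectral_radius (mixed_matrix n E D) < sqrt 2
            \<longleftrightarrow> spectral_radius (mixed_matrix n E D) \<le> 1)
       \<and> (spectral_radius (mixed_matrix n E D) \<le> 1
            \<longleftrightarrow> (\<forall>C \<in> components n E.
                   (\<exists>u v. C = {u, v} \<and> undirected_edge E D u v)
                 \<or> (\<exists>u v. C = {u, v} \<and> D u v)
                 \<or> (\<exists>u. C = {u})))"
proof -
  let ?\<rho> = "spectral_radius (mixed_matrix n E D)"
  let ?max_degree_le_1 = "\<forall>u<n. vertex_degree n E u \<le> 1"
  have one_less_sqrt_2: "(1::real) < sqrt 2" by simp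
  have "?max_degree_le_1" if "?\<rho> < sqrt 2"
  proof (intro allI impI)
    fix u assume "u < n"
    have "?\<rho>\<^sup>2 < 2"
      using that spectral_radius_nonneg[OF mixed_matrix_carrier assms(2)]
        power_strict_mono[of ?\<rho> "sqrt 2" 2] by simp
    with degree_le_spectral_radius_mixed_matrix[OF assms(1) \<open>u < n\<close>]
    show "vertex_degree n E u \<le> 1" by linarith
  qed
  moreover have "?max_degree_le_1 \<Longrightarrow> ?\<rho> \<le> 1"
    using spectral_radius_mixed_matrix_le_1[OF assms] by blast
  moreover have "?\<rho> \<le> 1 \<Longrightarrow> ?\<rho> < sqrt 2"
    using one_less_sqrt_2 by linarith
  ultimately have "?\<rho> < sqrt 2 \<longleftrightarrow> ?max_degree_le_1" and "?\<rho> \<le> 1 \<longleftrightarrow> ?max_degree_le_1"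
    by blast+
  then show ?thesis
    unfolding vertex_degree_le_1_iff[OF assms(1)]
      components_classification_iff_unique_neighbours[OF assms(1)]
    by simp
qed

end
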